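(* Let $\mathcal V$ be a multivector field on $X$ and let $C\subset X$ be a strongly connected component of the digraph $G_{\mathcal V}$ such that there exists an essential full solution with image contained in $C$. Then $C$ is an isolated invariant set.
   Context: $X$ is a finite $T_0$ topological space. For $A\subset X$, $\operatorname{cl}A$ is its closure and $\operatorname{mo}A:=\operatorname{cl}A\setminus A$. $A$ is locally closed if it is the intersection of an open and a closed subset of $X$. $H$ denotes relative singular homology. A multivector is a nonempty locally closed subset of $X$; a multivector field $\mathcal V$ on $X$ is a partition of $X$ into multivectors. For $x\in X$, $[x]$ denotes the element of $\mathcal V$ containing $x$. A multivector $V$ is critical if $H(\operatorname{cl}V,\operatorname{mo}V)\neq0$, regular otherwise. Put $\Pi_{\mathcal V}(x):=[x]\cup\operatorname{cl}\{x\}$ and $\Pi_{\mathcal V}(A):=\bigcup_{x\in A}\Pi_{\mathcal V}(x)$. $G_{\mathcal V}$ is the digraph with vertex set $X$ and an edge $x\to y$ iff $y\in\Pi_{\mathcal V}(x)$; its strongly connected components are the equivalence classes of the relation "there is a directed path from $x$ to $y$ and from $y$ to $x$". A $\mathbb Z$-interval is $\mathbb Z\cap I$ for a real interval $I$. A solution in $A\subset X$ is a map $\varphi:D\to A$ on a $\mathbb Z$-interval $D$ with $\varphi(i+1)\in\Pi_{\mathcal V}(\varphi(i))$ whenever $i,i+1\in D$; it is full if $D=\mathbb Z$, and a path if $D$ is bounded, its endpoints being $\varphi(\min D)$ and $\varphi(\max D)$. A full solution $\varphi$ is essential if for every $t\in\mathbb Z$ with $[\varphi(t)]$ regular, the set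 $\{s\in\mathbb Z:\varphi(s)\notin[\varphi(t)]\}$ is unbounded below and unbounded above. $\operatorname{Inv}A$ is the set of $x\in A$ such that there is an essential full solution $\varphi$ with image in $A$ and $\varphi(0)=x$; $A$ is invariant if $\operatorname{Inv}A=A$. A closed set $N$ isolates an invariant set $S\subset N$ if (a) every path in $N$ with both endpoints in $S$ has image contained in $S$, and (b) $\Pi_{\mathcal V}(S)\subset N$. An invariant set is an isolated invariant set if some closed set isolates it. *)

theory Defs
  imports "HOL-Analysis.Analysis" "HOL-Homology.Homology"
begin

definition locally_closed :: "'a topology \<Rightarrow> 'a set \<Rightarrow> bool" where
  "locally_closed X A \<longleftrightarrow> (\<exists>U C. openin X U \<and> closedin X C \<and> A = U \<inter> C)"

definition mouth :: "'a topology \<Rightarrow> 'a set \<Rightarrow> 'a set" where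
  "mouth X A = X closure_of A - A"

definition multivector :: "'a topology \<Rightarrow> 'a set \<Rightarrow> bool" where
  "multivector X A \<longleftrightarrow> A \<noteq> {} \<and> locally_closed X A"

definition multivector_field :: "'a topology \<Rightarrow> 'a set set \<Rightarrow> bool" where
  "multivector_field X V \<longleftrightarrow>
     (\<forall>A\<in>V. multivector X A) \<and> \<Union>V = topspace X \<and>
     (\<forall>A\<in>V. \<forall>B\<in>V. A \<noteq> B \<longrightarrow> A \<inter> B = {})"

definition mvclass :: "'a set set \<Rightarrow> 'a \<Rightarrow> 'a set" where
  "mvclass V x = (THE A. A \<in> V \<and> x \<in> A)"

definition critical :: "'a topology \<Rightarrow> 'a set \<Rightarrow> bool" where
  "critical X A \<longleftrightarrow>
     (\<exists>p. \<not> trivial_group (relative_homology_group p (subtopology X (X closure_of A)) (mouth X A)))"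

definition regular :: "'a topology \<Rightarrow> 'a set \<Rightarrow> bool" where
  "regular X A \<longleftrightarrow> \<not> critical X A"

definition PiV :: "'a topology \<Rightarrow> 'a set set \<Rightarrow> 'a \<Rightarrow> 'a set" where
  "PiV X V x = mvclass V x \<union> X closure_of {x}"

definition PiV_set :: "'a topology \<Rightarrow> 'a set set \<Rightarrow> 'a set \<Rightarrow> 'a set" where
  "PiV_set X V A = (\<Union>x\<in>A. PiV X V x)"

definition GV_edges :: "'a topology \<Rightarrow> 'a set set \<Rightarrow> ('a \<times> 'a) set" where
  "GV_edges X V = {(x, y). x \<in> topspace X \<and> y \<in> topspace X \<and> y \<in> PiV X V x}"

definition strongly_connected_component :: "'a topology \<Rightarrow> 'a set set \<Rightarrow> 'a set \<Rightarrow> bool" where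
  "strongly_connected_component X V C \<longleftrightarrow>
     (\<exists>x\<in>topspace X. C = {y \<in> topspace X. (x, y) \<in> (GV_edges X V)\<^sup>* \<and> (y, x) \<in> (GV_edges X V)\<^sup>*})"

definition full_solution :: "'a topology \<Rightarrow> 'a set set \<Rightarrow> (int \<Rightarrow> 'a) \<Rightarrow> bool" where
  "full_solution X V \<phi> \<longleftrightarrow> (\<forall>i. \<phi> (i + 1) \<in> PiV X V (\<phi> i))"

definition essential_solution :: "'a topology \<Rightarrow> 'a set set \<Rightarrow> (int \<Rightarrow> 'a) \<Rightarrow> bool" where
  "essential_solution X V \<phi> \<longleftrightarrow> full_solution X V \<phi> \<and>
     (\<forall>t. regular X (mvclass V (\<phi> t)) \<longrightarrow>
        (\<forall>n. \<exists>s\<le>n. \<phi> s \<notin> mvclass V (\<phi> t)) \<and>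
        (\<forall>n. \<exists>s\<ge>n. \<phi> s \<notin> mvclass V (\<phi> t)))"

definition Inv :: "'a topology \<Rightarrow> 'a set set \<Rightarrow> 'a set \<Rightarrow> 'a set" where
  "Inv X V A = {x \<in> A. \<exists>\<phi>. essential_solution X V \<phi> \<and> range \<phi> \<subseteq> A \<and> \<phi> 0 = x}"

definition invariant :: "'a topology \<Rightarrow> 'a set set \<Rightarrow> 'a set \<Rightarrow> bool" where
  "invariant X V A \<longleftrightarrow> Inv X V A = A"

text \<open>A path is a solution on a nonempty bounded Z-interval {a..b}.\<close>
definition isolates :: "'a topology \<Rightarrow> 'a set set \<Rightarrow> 'a set \<Rightarrow> 'a set \<Rightarrow> bool" where
  "isolates X V N S \<longleftrightarrow> closedin X N \<and> S \<subseteq> N \<and>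
     (\<forall>\<phi> (a::int) b. a \<le> b \<and> (\<forall>i. a \<le> i \<and> i < b \<longrightarrow> \<phi> (i + 1) \<in> PiV X V (\<phi> i)) \<and>
        \<phi> ` {a..b} \<subseteq> N \<and> \<phi> a \<in> S \<and> \<phi> b \<in> S \<longrightarrow> \<phi> ` {a..b} \<subseteq> S) \<and>
     PiV_set X V S \<subseteq> N"

definition isolated_invariant_set :: "'a topology \<Rightarrow> 'a set set \<Rightarrow> 'a set \<Rightarrow> bool" where
  "isolated_invariant_set X V S \<longleftrightarrow> invariant X V S \<and> (\<exists>N. isolates X V N S)"

end

theory Submission
  imports Defs
begin

text \<open>
  The whole space isolates a strongly connected component \<open>C\<close> of \<open>G\<^sub>\<V>\<close>: a path of \<open>G\<^sub>\<V>\<close>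
  that leaves \<open>C\<close> and comes back to it lies on a cycle through \<open>C\<close>, hence inside \<open>C\<close>.
  For invariance, pick \<open>x \<in> C\<close>. If \<open>C\<close> meets a second multivector besides \<open>[x]\<close>, running
  periodically around a closed walk in \<open>C\<close> through \<open>x\<close> and a point of that multivector
  gives an essential solution through \<open>x\<close>. Otherwise \<open>C \<subseteq> [x]\<close>, so the given essential
  solution never leaves \<open>[x]\<close>; this forces \<open>[x]\<close> to be critical, and then the constant
  solution at \<open>x\<close> is essential.
\<close>

lemma mvclass_eqI:
  assumes "multivector_field X V" "A \<in> V" "x \<in> A"
  shows "mvclass V x = A"
  unfolding mvclass_def
proof (rule the_equality)
  show "A \<in> V \<and> x \<in> A" using assms by blast
next
  fix B assume "B \<in> V \<and> x \<in> B"
  then show "B = A" using assms unfolding multivector_field_def by blast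
qed

lemma mvclass_in_field:
  assumes "multivector_field X V" "x \<in> topspace X"
  shows "mvclass V x \<in> V" and "x \<in> mvclass V x"
proof -
  obtain A where "A \<in> V" "x \<in> A" using assms unfolding multivector_field_def by blast
  then show "mvclass V x \<in> V" "x \<in> mvclass V x" using mvclass_eqI[OF assms(1)] by simp_all
qed

lemma PiV_subset_topspace:
  assumes "multivector_field X V" "x \<in> topspace X"
  shows "PiV X V x \<subseteq> topspace X"
  using mvclass_in_field[OF assms] assms(1) closure_of_subset_topspace[of X "{x}"]
  unfolding PiV_def multivector_field_def by blast

lemma chain_rtrancl:
  assumes "\<And>k. i \<le> k \<Longrightarrow> k < j \<Longrightarrow> (h k, h (Suc k)) \<in> R" "i \<le> j"
  shows "(h i, h j) \<in> R\<^sup>*"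
proof -
  have "(h i, h j) \<in> R ^^ (j - i)"
    unfolding relpow_fun_conv using assms by (intro exI[of _ "\<lambda>k. h (i + k)"]) auto
  then show ?thesis by (rule relpow_imp_rtrancl)
qed

lemma int_chain_rtrancl:
  fixes \<phi> :: "int \<Rightarrow> 'a"
  assumes "\<And>k. a \<le> k \<Longrightarrow> k < b \<Longrightarrow> (\<phi> k, \<phi> (k + 1)) \<in> R" "a \<le> i" "i \<le> j" "j \<le> b"
  shows "(\<phi> i, \<phi> j) \<in> R\<^sup>*"
proof -
  let ?h = "\<lambda>k. \<phi> (i + int k)"
  have "(?h k, ?h (Suc k)) \<in> R" if "k < nat (j - i)" for k
  proof -
    have "(\<phi> (i + int k), \<phi> (i + int k + 1)) \<in> R" using assms that by (intro assms(1)) auto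
    then show ?thesis by (simp add: algebra_simps)
  qed
  then have "(?h 0, ?h (nat (j - i))) \<in> R\<^sup>*"
    by (intro chain_rtrancl) auto
  then show ?thesis using assms(3) by simp
qed

lemma GV_rtrancl_topspace:
  assumes "(a, b) \<in> (GV_edges X V)\<^sup>*" "a \<in> topspace X"
  shows "b \<in> topspace X"
  using assms by (induction rule: rtrancl_induct) (auto simp: GV_edges_def)

lemma strongly_connected_component_subset_topspace:
  assumes "strongly_connected_component X V C"
  shows "C \<subseteq> topspace X"
  using assms unfolding strongly_connected_component_def by auto

lemma strongly_connected_component_rtrancl:
  assumes "strongly_connected_component X V C" "a \<in> C" "b \<in> C"
  shows "(a, b) \<in> (GV_edges X V)\<^sup>*"
proof -
  obtain x where "C = {y \<in> topspace X. (x, y) \<in> (GV_edges X V)\<^sup>* \<and> (y, x) \<in> (GV_edges X V)\<^sup>*}"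
    using assms(1) unfolding strongly_connected_component_def by blast
  with assms(2,3) have "(a, x) \<in> (GV_edges X V)\<^sup>*" "(x, b) \<in> (GV_edges X V)\<^sup>*" by auto
  then show ?thesis by (rule rtrancl_trans)
qed

lemma strongly_connected_component_cycle:
  assumes "strongly_connected_component X V C" "a \<in> C"
    and "(a, z) \<in> (GV_edges X V)\<^sup>*" "(z, a) \<in> (GV_edges X V)\<^sup>*"
  shows "z \<in> C"
proof -
  obtain x where C: "C = {y \<in> topspace X. (x, y) \<in> (GV_edges X V)\<^sup>* \<and> (y, x) \<in> (GV_edges X V)\<^sup>*}"
    using assms(1) unfolding strongly_connected_component_def by blast
  have "a \<in> topspace X" using C assms(2) by blast
  then have "z \<in> topspace X" using assms(3) by (rule GV_rtrancl_topspace[rotated])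
  moreover have "(x, z) \<in> (GV_edges X V)\<^sup>*"
    using C assms(2,3) by (blast intro: rtrancl_trans)
  moreover have "(z, x) \<in> (GV_edges X V)\<^sup>*"
    using C assms(2,4) by (blast intro: rtrancl_trans)
  ultimately show ?thesis using C by blast
qed

lemma strongly_connected_component_isolated_by_topspace:
  assumes "multivector_field X V" "strongly_connected_component X V C"
  shows "isolates X V (topspace X) C"
  unfolding isolates_def
proof (intro conjI allI impI)
  note C_top = strongly_connected_component_subset_topspace[OF assms(2)]
  show "closedin X (topspace X)" by simp
  show "C \<subseteq> topspace X" by (fact C_top)
  show "PiV_set X V C \<subseteq> topspace X"
    unfolding PiV_set_def using PiV_subset_topspace[OF assms(1)] C_top by blast
next
  fix \<phi> :: "int \<Rightarrow> 'a" and a b :: int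
  assume path: "a \<le> b \<and> (\<forall>i. a \<le> i \<and> i < b \<longrightarrow> \<phi> (i + 1) \<in> PiV X V (\<phi> i)) \<and>
      \<phi> ` {a..b} \<subseteq> topspace X \<and> \<phi> a \<in> C \<and> \<phi> b \<in> C"
  let ?E = "GV_edges X V"
  have edge: "(\<phi> k, \<phi> (k + 1)) \<in> ?E" if "a \<le> k" "k < b" for k
    using path that unfolding GV_edges_def by auto
  show "\<phi> ` {a..b} \<subseteq> C"
  proof
    fix z assume "z \<in> \<phi> ` {a..b}"
    then obtain i where i: "a \<le> i" "i \<le> b" "z = \<phi> i" by auto
    have "(\<phi> a, \<phi> i) \<in> ?E\<^sup>*" "(\<phi> i, \<phi> b) \<in> ?E\<^sup>*"
      using int_chain_rtrancl[where \<phi> = \<phi> and R = ?E, OF edge] i by auto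
    moreover have "(\<phi> b, \<phi> a) \<in> ?E\<^sup>*"
      using strongly_connected_component_rtrancl[OF assms(2)] path by blast
    ultimately show "z \<in> C"
      using strongly_connected_component_cycle[OF assms(2)] path i by (metis rtrancl_trans)
  qed
qed

lemma essential_solution_within_multivector_critical:
  assumes "multivector_field X V" "essential_solution X V \<phi>" "A \<in> V" "range \<phi> \<subseteq> A"
  shows "\<not> regular X A"
proof
  assume "regular X A"
  moreover have "mvclass V (\<phi> 0) = A" using assms by (intro mvclass_eqI) auto
  ultimately obtain s where "\<phi> s \<notin> A"
    using assms(2) unfolding essential_solution_def by metis
  with assms(4) show False by blast
qed

lemma essential_solution_const:
  assumes "multivector_field X V" "x \<in> topspace X" "\<not> regular X (mvclass V x)"
  shows "essential_solution X V (\<lambda>_. x)"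
  using assms mvclass_in_field[OF assms(1,2)]
  unfolding essential_solution_def full_solution_def PiV_def by auto

lemma periodic_index_Suc:
  fixes p :: nat
  assumes "0 < p" "h p = h 0"
  shows "h (nat ((t + 1) mod int p)) = h (Suc (nat (t mod int p)))"
proof (cases "t mod int p + 1 = int p")
  case True
  then have "(t + 1) mod int p = 0"
    by (simp add: mod_add_left_eq[of t "int p" 1, symmetric])
  moreover have "0 \<le> t mod int p" using assms(1) by simp
  with True have "Suc (nat (t mod int p)) = p" by arith
  ultimately show ?thesis using assms(2) by simp
next
  case False
  moreover have "0 \<le> t mod int p" "t mod int p < int p" using assms(1) by auto
  ultimately have "(t + 1) mod int p = t mod int p + 1"
    by (simp add: mod_add_left_eq[of t "int p" 1, symmetric])
  then show ?thesis using \<open>0 \<le> t mod int p\<close> by (simp add: nat_add_distrib)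
qed

lemma mod_eq_unbounded:
  fixes p c N :: int
  assumes "0 \<le> c" "c < p"
  shows "\<exists>s\<le>N. s mod p = c" and "\<exists>s\<ge>N. s mod p = c"
proof -
  have N_le: "\<bar>N\<bar> \<le> p * \<bar>N\<bar>"
    using assms mult_right_mono[of 1 p "\<bar>N\<bar>"] by simp
  then have "c + p * - (\<bar>N\<bar> + 1) \<le> N"
    using assms by (simp add: algebra_simps)
  moreover have "(c + p * - (\<bar>N\<bar> + 1)) mod p = c" using assms by simp
  ultimately show "\<exists>s\<le>N. s mod p = c" by blast
  have "N \<le> c + p * \<bar>N\<bar>" using assms N_le by simp
  moreover have "(c + p * \<bar>N\<bar>) mod p = c" using assms by simp
  ultimately show "\<exists>s\<ge>N. s mod p = c" by blast
qed

lemma periodic_essential_solution: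
  fixes h :: "nat \<Rightarrow> 'a" and p :: nat
  assumes "0 < p" "h p = h 0"
    and step: "\<And>k. k < p \<Longrightarrow> h (Suc k) \<in> PiV X V (h k)"
    and leaves: "\<And>k. k < p \<Longrightarrow> \<exists>c<p. h c \<notin> mvclass V (h k)"
  shows "essential_solution X V (\<lambda>t. h (nat (t mod int p)))"
  unfolding essential_solution_def full_solution_def
proof (intro conjI allI impI)
  have index_bound: "nat (t mod int p) < p" for t
    using assms(1) by (simp add: nat_less_iff)
  show "h (nat ((t + 1) mod int p)) \<in> PiV X V (h (nat (t mod int p)))" for t
    using step[OF index_bound] periodic_index_Suc[OF assms(1,2)] by simp
  fix t N :: int
  obtain c where c: "c < p" "h c \<notin> mvclass V (h (nat (t mod int p)))"
    using leaves[OF index_bound] by blast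
  have hits: "h (nat (s mod int p)) = h c" if "s mod int p = int c" for s
    using that by simp
  show "\<exists>s\<le>N. h (nat (s mod int p)) \<notin> mvclass V (h (nat (t mod int p)))"
    using mod_eq_unbounded(1)[of "int c" "int p" N] c hits by auto
  show "\<exists>s\<ge>N. h (nat (s mod int p)) \<notin> mvclass V (h (nat (t mod int p)))"
    using mod_eq_unbounded(2)[of "int c" "int p" N] c hits by auto
qed

lemma closed_walk_through:
  assumes "(x, y) \<in> R\<^sup>*" "(y, x) \<in> R\<^sup>*" "x \<noteq> y"
  obtains h :: "nat \<Rightarrow> 'a" and p n
  where "0 < n" "n < p" "h 0 = x" "h n = y" "h p = x" "\<And>k. k < p \<Longrightarrow> (h k, h (Suc k)) \<in> R"
proof -
  obtain n f where f: "f 0 = x" "f n = y" "\<And>i. i < n \<Longrightarrow> (f i, f (Suc i)) \<in> R"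
    using assms(1) unfolding rtrancl_power relpow_fun_conv by blast
  obtain m g where g: "g 0 = y" "g m = x" "\<And>i. i < m \<Longrightarrow> (g i, g (Suc i)) \<in> R"
    using assms(2) unfolding rtrancl_power relpow_fun_conv by blast
  have "0 < n" "0 < m" using f g assms(3) by (auto intro: gr0I)
  define h where "h k = (if k \<le> n then f k else g (k - n))" for k
  have walk: "(h k, h (Suc k)) \<in> R" if "k < n + m" for k
  proof (cases "k < n")
    case True
    then show ?thesis using f by (simp add: h_def)
  next
    case False
    have h_g: "h j = g (j - n)" if "n \<le> j" for j
      using that f g by (auto simp: h_def)
    have "(g (k - n), g (Suc (k - n))) \<in> R" using g False that by simp
    then show ?thesis using False h_g by (simp add: Suc_diff_le)
  qed
  have "h 0 = x" "h n = y" "h (n + m) = x"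
    using f g \<open>0 < m\<close> by (simp_all add: h_def)
  then show ?thesis using that[of n "n + m" h] walk \<open>0 < n\<close> \<open>0 < m\<close> by simp
qed

lemma strongly_connected_component_invariant:
  assumes mvf: "multivector_field X V" and scc: "strongly_connected_component X V C"
    and "\<exists>\<phi>. essential_solution X V \<phi> \<and> range \<phi> \<subseteq> C"
  shows "invariant X V C"
proof -
  note C_top = strongly_connected_component_subset_topspace[OF scc]
  have "x \<in> Inv X V C" if x: "x \<in> C" for x
  proof (cases "C \<subseteq> mvclass V x")
    case True
    obtain \<phi> where "essential_solution X V \<phi>" "range \<phi> \<subseteq> C" using assms(3) by blast
    then have "\<not> regular X (mvclass V x)"
      using True mvclass_in_field[OF mvf] x C_top
      by (intro essential_solution_within_multivector_critical[OF mvf]) auto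
    then have "essential_solution X V (\<lambda>_. x)"
      using x C_top by (intro essential_solution_const[OF mvf]) auto
    then show ?thesis unfolding Inv_def using x by auto
  next
    case False
    then obtain y where y: "y \<in> C" "y \<notin> mvclass V x" by blast
    then have "x \<noteq> y" using mvclass_in_field(2)[OF mvf] x C_top by blast
    then obtain h p n where "0 < n" "n < p" "h 0 = x" "h n = y" "h p = x"
      and edge: "\<And>k. k < p \<Longrightarrow> (h k, h (Suc k)) \<in> GV_edges X V"
      using closed_walk_through strongly_connected_component_rtrancl[OF scc] x y by metis
    have h_C: "h k \<in> C" if "k \<le> p" for k
    proof (rule strongly_connected_component_cycle[OF scc x])
      show "(x, h k) \<in> (GV_edges X V)\<^sup>*"
        using chain_rtrancl[of 0 k h] edge that \<open>h 0 = x\<close> by auto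
      show "(h k, x) \<in> (GV_edges X V)\<^sup>*"
        using chain_rtrancl[of k p h] edge that \<open>h p = x\<close> by auto
    qed
    have "\<exists>c<p. h c \<notin> mvclass V (h k)" if "k < p" for k
    proof (cases "x \<in> mvclass V (h k)")
      case True
      have "h k \<in> topspace X" using h_C that C_top by auto
      then have "mvclass V (h k) = mvclass V x"
        using True mvclass_in_field(1)[OF mvf] by (intro mvclass_eqI[OF mvf, symmetric]) auto
      then show ?thesis using \<open>n < p\<close> \<open>h n = y\<close> y by auto
    next
      case False
      then show ?thesis using \<open>n < p\<close> \<open>h 0 = x\<close> by (intro exI[of _ 0]) auto
    qed
    then have "essential_solution X V (\<lambda>t. h (nat (t mod int p)))"
      using edge \<open>n < p\<close> \<open>h 0 = x\<close> \<open>h p = x\<close>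
      by (intro periodic_essential_solution) (auto simp: GV_edges_def)
    moreover have "h (nat (t mod int p)) \<in> C" for t
      using \<open>n < p\<close> by (intro h_C) (simp add: nat_le_iff order.strict_implies_order)
    ultimately show ?thesis unfolding Inv_def using x \<open>h 0 = x\<close> by auto
  qed
  then show ?thesis unfolding invariant_def Inv_def by auto
qed

theorem theorem4p15:
  fixes X :: "'a topology" and V :: "'a set set" and C :: "'a set"
  assumes "finite (topspace X)"
    and "t0_space X"
    and "multivector_field X V"
    and "strongly_connected_component X V C"
    and "\<exists>\<phi>. essential_solution X V \<phi> \<and> range \<phi> \<subseteq> C"
  shows "isolated_invariant_set X V C"
  unfolding isolated_invariant_set_def
  using strongly_connected_component_invariant[OF assms(3-5)]
    strongly_connected_component_isolated_by_topspace[OF assms(3,4)]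
  by blast

end
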